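(* Let $G$ be a finite simple graph with an initial configuration $c_0$ and let $u,v\in V(G)$ with $N(u)=N(v)$. If $c_t(u)=c_t(v)$ for some $t\geq0$, then $c_r(u)=c_r(v)$ for all integers $r\geq t$.
   Context: Diffusion process: for a configuration $c_t:V(G)\to\mathbb{Z}$, $c_{t+1}(w)=c_t(w)-|\{x\in N(w): c_t(w)>c_t(x)\}|+|\{x\in N(w): c_t(w)<c_t(x)\}|$ for all $w$ simultaneously. *)

theory Defs
  imports Main
begin

definition simple_graph :: "'a set \<Rightarrow> ('a \<Rightarrow> 'a \<Rightarrow> bool) \<Rightarrow> bool" where
  "simple_graph V E \<longleftrightarrow> finite V \<and> (\<forall>x y. E x y \<longrightarrow> x \<in> V \<and> y \<in> V)
     \<and> (\<forall>x y. E x y \<longrightarrow> E y x) \<and> (\<forall>x. \<not> E x x)"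

definition nbhd :: "'a set \<Rightarrow> ('a \<Rightarrow> 'a \<Rightarrow> bool) \<Rightarrow> 'a \<Rightarrow> 'a set" where
  "nbhd V E w = {x \<in> V. E w x}"

definition diffusion_step :: "'a set \<Rightarrow> ('a \<Rightarrow> 'a \<Rightarrow> bool) \<Rightarrow> ('a \<Rightarrow> int) \<Rightarrow> ('a \<Rightarrow> int)" where
  "diffusion_step V E c = (\<lambda>w. c w
      - int (card {x \<in> nbhd V E w. c w > c x})
      + int (card {x \<in> nbhd V E w. c w < c x}))"

definition config :: "'a set \<Rightarrow> ('a \<Rightarrow> 'a \<Rightarrow> bool) \<Rightarrow> ('a \<Rightarrow> int) \<Rightarrow> nat \<Rightarrow> ('a \<Rightarrow> int)" where
  "config V E c0 t = (diffusion_step V E ^^ t) c0"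

end

theory Submission
  imports Defs
begin

text \<open>The update at a vertex depends only on its own value and the values on its
  neighbourhood, so twins (vertices with equal neighbourhoods) that agree once
  are updated identically and agree forever after.\<close>

lemma diffusion_step_twins_eq:
  assumes "nbhd V E u = nbhd V E v" and "c u = c v"
  shows "diffusion_step V E c u = diffusion_step V E c v"
  using assms unfolding diffusion_step_def by simp

lemma config_Suc: "config V E c0 (Suc n) = diffusion_step V E (config V E c0 n)"
  by (simp add: config_def)

lemma config_twins_eq_mono:
  assumes "nbhd V E u = nbhd V E v"
    and "config V E c0 t u = config V E c0 t v"
    and "t \<le> r"
  shows "config V E c0 r u = config V E c0 r v"
  using \<open>t \<le> r\<close>
proof (induction r rule: dec_induct)
  case base
  show ?case by (fact assms(2))
next
  case (step n)
  show ?case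
    unfolding config_Suc by (rule diffusion_step_twins_eq[OF assms(1) step.IH])
qed

theorem corollary11:
  fixes V :: "'a set" and E :: "'a \<Rightarrow> 'a \<Rightarrow> bool" and c0 :: "'a \<Rightarrow> int"
    and u v :: 'a and t r :: nat
  assumes "simple_graph V E"
    and "u \<in> V" and "v \<in> V"
    and "nbhd V E u = nbhd V E v"
    and "config V E c0 t u = config V E c0 t v"
    and "r \<ge> t"
  shows "config V E c0 r u = config V E c0 r v"
  using config_twins_eq_mono[OF assms(4,5,6)] .

end
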